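(* For any signed graph $(G,\sigma)$, $\chi_c\big((G,\sigma)\square(G,\sigma)\big)=\chi_c(G,\sigma)$.
   Context: A signed graph $(G,\sigma)$ is a finite graph $G$ (multiple edges allowed, no loops) with a signature $\sigma:E(G)\to\{+1,-1\}$. For real $r\ge 2$, $C^r$ is the circle of circumference $r$, $d_{C^r}(x,y)=\min\{|x-y|,r-|x-y|\}$, $\overline{x}=x+r/2\pmod r$. A circular $r$-coloring of $(G,\sigma)$ is $f:V(G)\to C^r$ with $d_{C^r}(f(u),f(v))\ge1$ for each positive edge $uv$ and $d_{C^r}(f(u),\overline{f(v)})\ge1$ for each negative edge $uv$; $\chi_c(G,\sigma)$ is the infimum of such $r\ge2$. The Type 1 Cartesian product $(G,\sigma)\square(H,\tau)$ has vertex set $V(G)\times V(H)$, with $(u,x)(v,y)$ an edge iff either $u=v$ and $xy\in E(H)$, or $x=y$ and $uv\in E(G)$; the edge $(u,x)(v,x)$ has sign $\sigma(uv)$ and the edge $(u,x)(u,y)$ has sign $\tau(xy)$. *)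

theory Defs
  imports Complex_Main
begin

text \<open>A signed (multi)graph: vertex set, edge set, an endpoint map (orientation is
irrelevant for everything below), and a signature with values in {+1,-1}.\<close>

record ('v, 'e) sgraph =
  verts :: "'v set"
  edges :: "'e set"
  ends  :: "'e \<Rightarrow> 'v \<times> 'v"
  sgn   :: "'e \<Rightarrow> int"

definition wf_sgraph :: "('v, 'e) sgraph \<Rightarrow> bool" where
  "wf_sgraph G \<longleftrightarrow> finite (verts G) \<and> finite (edges G) \<and>
     (\<forall>e\<in>edges G. fst (ends G e) \<in> verts G \<and> snd (ends G e) \<in> verts G
        \<and> fst (ends G e) \<noteq> snd (ends G e) \<and> sgn G e \<in> {1, -1})"

text \<open>Points of the circle C^r are represented by reals in [0, r).\<close>

definition cdist :: "real \<Rightarrow> real \<Rightarrow> real \<Rightarrow> real" where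
  "cdist r x y = min \<bar>x - y\<bar> (r - \<bar>x - y\<bar>)"

definition antipode :: "real \<Rightarrow> real \<Rightarrow> real" where
  "antipode r x = (if x + r / 2 < r then x + r / 2 else x - r / 2)"

definition circ_coloring :: "('v, 'e) sgraph \<Rightarrow> real \<Rightarrow> ('v \<Rightarrow> real) \<Rightarrow> bool" where
  "circ_coloring G r f \<longleftrightarrow>
     (\<forall>v\<in>verts G. 0 \<le> f v \<and> f v < r) \<and>
     (\<forall>e\<in>edges G.
        (sgn G e = 1 \<longrightarrow> cdist r (f (fst (ends G e))) (f (snd (ends G e))) \<ge> 1) \<and>
        (sgn G e = -1 \<longrightarrow> cdist r (f (fst (ends G e))) (antipode r (f (snd (ends G e)))) \<ge> 1))"

definition chi_c :: "('v, 'e) sgraph \<Rightarrow> real" where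
  "chi_c G = Inf {r. r \<ge> 2 \<and> (\<exists>f. circ_coloring G r f)}"

text \<open>Type 1 Cartesian product. Edges of the product: (u, f) for u a vertex of G and
f an edge of H (copy of f in the H-fibre over u), and (e, x) for e an edge of G and
x a vertex of H.\<close>

definition sprod :: "('v, 'e) sgraph \<Rightarrow> ('w, 'f) sgraph \<Rightarrow>
    ('v \<times> 'w, ('v \<times> 'f) + ('e \<times> 'w)) sgraph" where
  "sprod G H = \<lparr> verts = verts G \<times> verts H,
     edges = Inl ` (verts G \<times> edges H) \<union> Inr ` (edges G \<times> verts H),
     ends = case_sum (\<lambda>(u, f). ((u, fst (ends H f)), (u, snd (ends H f))))
                     (\<lambda>(e, x). ((fst (ends G e), x), (snd (ends G e), x))),
     sgn = case_sum (\<lambda>(u, f). sgn H f) (\<lambda>(e, x). sgn G e) \<rparr>"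

end

theory Submission
  imports Defs "HOL-Library.Real_Mod"
begin

text \<open>A circular \<open>r\<close>-colouring \<open>f\<close> of \<open>G\<close> induces the colouring \<open>(u, v) \<mapsto> f u + f v\<close>
of \<open>G \<box> G\<close>: restricted to any fibre it is a rotation of \<open>f\<close>, and rotations preserve
circular distances and commute with the antipodal map. Conversely, every fibre of a
colouring of \<open>G \<box> G\<close> is a colouring of \<open>G\<close>. Hence both graphs admit circular
\<open>r\<close>-colourings for exactly the same \<open>r\<close> (when \<open>G\<close> has no vertices, it has no edges
either, and both conditions are vacuous).\<close>

lemma cdist_rcong:
  assumes r: "r > 0" and "a \<in> {0..<r}" "b \<in> {0..<r}" "a' \<in> {0..<r}" "b' \<in> {0..<r}"
    and cong: "[a - b = a' - b'] (rmod r)"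
  shows "cdist r a b = cdist r a' b'"
proof -
  obtain n where n: "a' - b' = a - b + of_int n * r"
    using cong by (auto simp: rcong_altdef)
  with assms(2-5) have "of_int n * r < 2 * r" "(- 2) * r < of_int n * r"
    unfolding atLeastLessThan_iff by linarith+
  with r have "of_int n < (2::real)" "- 2 < (of_int n :: real)"
    by (simp_all only: mult_less_cancel_right_pos)
  then have "n = 0 \<or> n = 1 \<or> n = -1"
    by linarith
  with n assms show ?thesis
    by (auto simp: cdist_def)
qed

lemma antipode_in_range: "r > 0 \<Longrightarrow> y \<in> {0..<r} \<Longrightarrow> antipode r y \<in> {0..<r}"
  by (auto simp: antipode_def)

lemma antipode_rcong: "[antipode r y = y + r / 2] (rmod r)"
  unfolding antipode_def rcong_altdef by (rule exI[of _ "if y + r / 2 < r then 0 else 1"]) simp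

lemma rmod_in_range: "r > 0 \<Longrightarrow> x rmod r \<in> {0..<r}"
  by (simp add: rmod_nonneg rmod_less)

lemma cdist_rotate:
  assumes "r > 0" "a \<in> {0..<r}" "b \<in> {0..<r}"
  shows "cdist r ((a + c) rmod r) ((b + c) rmod r) = cdist r a b"
proof (rule cdist_rcong)
  have "[(a + c) rmod r - (b + c) rmod r = (a + c) - (b + c)] (rmod r)"
    by (intro rcong_intros)
  then show "[(a + c) rmod r - (b + c) rmod r = a - b] (rmod r)"
    by simp
qed (use assms rmod_in_range in auto)

lemma cdist_antipode_rotate:
  assumes "r > 0" "a \<in> {0..<r}" "b \<in> {0..<r}"
  shows "cdist r ((a + c) rmod r) (antipode r ((b + c) rmod r)) = cdist r a (antipode r b)"
proof (rule cdist_rcong)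
  have "[(a + c) rmod r - antipode r ((b + c) rmod r) = (a + c) - ((b + c) rmod r + r / 2)] (rmod r)"
    by (intro rcong_intros antipode_rcong)
  also have "[(a + c) - ((b + c) rmod r + r / 2) = (a + c) - ((b + c) + r / 2)] (rmod r)"
    by (intro rcong_intros)
  also have "(a + c) - ((b + c) + r / 2) = a - (b + r / 2)"
    by simp
  also have "[a - (b + r / 2) = a - antipode r b] (rmod r)"
    by (intro rcong_intros rcong_sym[OF antipode_rcong])
  finally show "[(a + c) rmod r - antipode r ((b + c) rmod r) = a - antipode r b] (rmod r)" .
qed (use assms rmod_in_range antipode_in_range in auto)

lemma circ_coloring_rotate:
  assumes G: "wf_sgraph G" and r: "r > 0" and f: "circ_coloring G r f"
  shows "circ_coloring G r (\<lambda>v. (f v + c) rmod r)"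
proof -
  have "f v \<in> {0..<r}" if "v \<in> verts G" for v
    using f that by (simp add: circ_coloring_def)
  then have "f (fst (ends G e)) \<in> {0..<r}" "f (snd (ends G e)) \<in> {0..<r}" if "e \<in> edges G" for e
    using G that by (auto simp: wf_sgraph_def)
  with f r show ?thesis
    by (auto simp: circ_coloring_def rmod_nonneg rmod_less cdist_rotate cdist_antipode_rotate)
qed

lemma sprod_simps [simp]:
  "verts (sprod G H) = verts G \<times> verts H"
  "edges (sprod G H) = Inl ` (verts G \<times> edges H) \<union> Inr ` (edges G \<times> verts H)"
  "ends (sprod G H) (Inl (u, f)) = ((u, fst (ends H f)), (u, snd (ends H f)))"
  "ends (sprod G H) (Inr (e, x)) = ((fst (ends G e), x), (snd (ends G e), x))"
  "sgn (sprod G H) (Inl (u, f)) = sgn H f"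
  "sgn (sprod G H) (Inr (e, x)) = sgn G e"
  by (simp_all add: sprod_def)

lemma ball_edges_sprod:
  "(\<forall>q\<in>edges (sprod G H). P q) \<longleftrightarrow>
     (\<forall>u\<in>verts G. \<forall>f\<in>edges H. P (Inl (u, f))) \<and> (\<forall>e\<in>edges G. \<forall>x\<in>verts H. P (Inr (e, x)))"
  by auto

lemma circ_coloring_sprod_iff:
  "circ_coloring (sprod G H) r F \<longleftrightarrow>
     (\<forall>x\<in>verts H. circ_coloring G r (\<lambda>u. F (u, x))) \<and>
     (\<forall>u\<in>verts G. circ_coloring H r (\<lambda>x. F (u, x)))"
  unfolding circ_coloring_def ball_edges_sprod by auto

lemma circ_colorable_sprod_iff:
  assumes G: "wf_sgraph G" "verts G \<noteq> {}" and H: "wf_sgraph H" "verts H \<noteq> {}" and r: "r > 0"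
  shows "(\<exists>F. circ_coloring (sprod G H) r F) \<longleftrightarrow>
           (\<exists>f. circ_coloring G r f) \<and> (\<exists>g. circ_coloring H r g)"
proof
  assume "\<exists>F. circ_coloring (sprod G H) r F"
  with G(2) H(2) show "(\<exists>f. circ_coloring G r f) \<and> (\<exists>g. circ_coloring H r g)"
    by (auto simp: circ_coloring_sprod_iff)
next
  assume "(\<exists>f. circ_coloring G r f) \<and> (\<exists>g. circ_coloring H r g)"
  then obtain f g where f: "circ_coloring G r f" and g: "circ_coloring H r g"
    by blast
  have "circ_coloring G r (\<lambda>u. (f u + g x) rmod r)" for x
    using circ_coloring_rotate[OF G(1) r f] .
  moreover have "circ_coloring H r (\<lambda>x. (f u + g x) rmod r)" for u
    using circ_coloring_rotate[OF H(1) r g] by (simp add: add.commute)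
  ultimately have "circ_coloring (sprod G H) r (\<lambda>(u, x). (f u + g x) rmod r)"
    by (simp add: circ_coloring_sprod_iff)
  then show "\<exists>F. circ_coloring (sprod G H) r F"
    by blast
qed

theorem proposition1:
  fixes G :: "('v, 'e) sgraph"
  assumes "wf_sgraph G"
  shows "chi_c (sprod G G) = chi_c G"
proof -
  have "{r. r \<ge> 2 \<and> (\<exists>F. circ_coloring (sprod G G) r F)} = {r. r \<ge> 2 \<and> (\<exists>f. circ_coloring G r f)}"
  proof (cases "verts G = {}")
    case True
    with assms have "edges G = {}"
      by (auto simp: wf_sgraph_def)
    with True show ?thesis
      by (simp add: circ_coloring_def)
  next
    case False
    have "(\<exists>F. circ_coloring (sprod G G) r F) \<longleftrightarrow> (\<exists>f. circ_coloring G r f)" if "r \<ge> 2" for r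
      using circ_colorable_sprod_iff[OF assms False assms False, of r] that by simp
    then show ?thesis
      by blast
  qed
  then show ?thesis
    by (simp add: chi_c_def)
qed

end
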